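(* Let $F$ be a field and $n_1,n_2,n_3,n_4$ positive integers; write $\mathrm{Mat}_{a,b}$ for $a\times b$ matrices over $F$. (1) Let $T_{42}\in\mathrm{Mat}_{n_4,n_2}$ and $T_{31}\in\mathrm{Mat}_{n_3,n_1}$. Then the subspace $\{X_{23}\in\mathrm{Mat}_{n_2,n_3} : T_{42}X_{23}=0,\ X_{23}T_{31}=0\}$ has codimension $n_3\operatorname{rank}(T_{42})+n_2\operatorname{rank}(T_{31})-\operatorname{rank}(T_{31})\operatorname{rank}(T_{42})$ in $\mathrm{Mat}_{n_2,n_3}$. (2) Let $T_{31}\in\mathrm{Mat}_{n_3,n_1}$, $T_{42}\in\mathrm{Mat}_{n_4,n_2}$, $T_{41}\in\mathrm{Mat}_{n_4,n_1}$, and assume that the row spaces of $T_{31}$ and $T_{41}$ (subspaces of $F^{n_1}$) intersect trivially and that the column spaces of $T_{42}$ and $T_{41}$ (subspaces of $F^{n_4}$) intersect trivially. Then the subspace $\{(X_{12},X_{34})\in\mathrm{Mat}_{n_1,n_2}\times\mathrm{Mat}_{n_3,n_4} : T_{31}X_{12}=X_{34}T_{42},\ T_{41}X_{12}=0,\ X_{34}T_{41}=0\}$ has codimension $\operatorname{rank}(T_{41})n_2+\operatorname{rank}(T_{41})n_3+\operatorname{rank}(T_{31})\operatorname{rank}(T_{42})+(n_2-\operatorname{rank}(T_{42}))\operatorname{rank}(T_{31})+(n_3-\operatorname{rank}(T_{31}))\operatorname{rank}(T_{42})$ in $\mathrm{Mat}_{n_1,n_2}\times\mathrm{Mat}_{n_3,n_4}$.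 *)

theory Defs
  imports "HOL-Analysis.Analysis"
begin

text \<open>Matrices of size a x b over a field are 'a^'b^'a (finite index types).
  They form a vector space over 'a under entrywise scaling.\<close>

definition mscale :: "'a::field \<Rightarrow> 'a^'n^'m \<Rightarrow> 'a^'n^'m" where
  "mscale c A = (\<chi> i j. c * A $ i $ j)"

definition pscale :: "'a::field \<Rightarrow> ('a^'n^'m) \<times> ('a^'q^'p) \<Rightarrow> ('a^'n^'m) \<times> ('a^'q^'p)" where
  "pscale c XY = (mscale c (fst XY), mscale c (snd XY))"

abbreviation mdim :: "('a::field^'n^'m) set \<Rightarrow> nat" where
  "mdim S \<equiv> vector_space.dim mscale S"

abbreviation pdim :: "(('a::field^'n^'m) \<times> ('a^'q^'p)) set \<Rightarrow> nat" where
  "pdim S \<equiv> vector_space.dim pscale S"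

definition row_space :: "'a::field^'n^'m \<Rightarrow> ('a^'n) set" where
  "row_space A = vec.span (rows A)"

definition col_space :: "'a::field^'n^'m \<Rightarrow> ('a^'m) set" where
  "col_space A = vec.span (columns A)"

end

theory Submission
  imports Defs
begin

text \<open>
  Every solution space in question is the kernel of a linear map restricted to a space of matrices
  whose columns lie in a subspace \<open>U\<close> and whose rows lie in a subspace \<open>W\<close>; such a space is a
  model of \<open>U \<otimes> W\<close> and has dimension \<open>dim U * dim W\<close>. In (1) the solutions are exactly the
  matrices with columns in the kernel of \<open>T42\<close> and rows in the left kernel of \<open>T31\<close>.
  In (2) restrict \<open>(X12, X34) \<mapsto> T31 X12 - X34 T42\<close> to the pairs with \<open>T41 X12 = 0\<close> and
  \<open>X34 T41 = 0\<close>. Because the row spaces of \<open>T31\<close> and \<open>T41\<close> meet trivially, \<open>T31\<close> maps the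
  kernel of \<open>T41\<close> onto its whole column space (a dimension count for the stacked matrix), and
  dually on the right; so the image is the sum of the matrices with columns in the column space of
  \<open>T31\<close> and those with rows in the row space of \<open>T42\<close>. Its dimension follows from
  \<open>dim (A + B) + dim (A \<inter> B) = dim A + dim B\<close>, and rank-nullity yields the codimension.
\<close>

section \<open>Rank and nullity over an arbitrary field\<close>

context vector_space_pair
begin

lemma subspace_eq_kernel_part_plus:
  assumes f: "Vector_Spaces.linear s1 s2 f" and S: "vs1.subspace S"
    and T: "T \<subseteq> S" and image: "f ` S \<subseteq> f ` T"
  shows "S = {k + y |k y. k \<in> S \<inter> {x. f x = 0} \<and> y \<in> T}"
proof (intro equalityI subsetI)
  interpret f: Vector_Spaces.linear s1 s2 f by fact
  fix x assume x: "x \<in> S"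
  then obtain y where y: "y \<in> T" "f y = f x"
    using image by (metis imageE imageI subsetD)
  have "x - y \<in> S \<inter> {x. f x = 0}"
    using vs1.subspace_diff[OF S x] y T by (auto simp: f.diff)
  then show "x \<in> {k + y |k y. k \<in> S \<inter> {x. f x = 0} \<and> y \<in> T}"
    using y(1) by force
next
  fix x assume "x \<in> {k + y |k y. k \<in> S \<inter> {x. f x = 0} \<and> y \<in> T}"
  then show "x \<in> S"
    using T vs1.subspace_add[OF S] by auto
qed

end

context finite_dimensional_vector_space_pair_1
begin

lemma dim_eq_dim_kernel_add_dim_image:
  assumes f: "Vector_Spaces.linear s1 s2 f" and S: "vs1.subspace S"
  shows "vs1.dim S = vs1.dim (S \<inter> {x. f x = 0}) + vs2.dim (f ` S)"
proof -
  \<comment> \<open>Lift a basis of \<open>f ` S\<close> to \<open>P \<subseteq> S\<close>; then \<open>S\<close> is the direct sum of its kernel part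
    and \<open>span P\<close>.\<close>
  interpret f: Vector_Spaces.linear s1 s2 f by fact
  define K where "K = S \<inter> {x. f x = 0}"
  obtain B where B: "B \<subseteq> f ` S" "vs2.independent B" "f ` S \<subseteq> vs2.span B"
      "card B = vs2.dim (f ` S)"
    using vs2.basis_exists by blast
  obtain g where g: "\<And>b. b \<in> B \<Longrightarrow> g b \<in> S \<and> f (g b) = b"
    using B(1) by (metis f_inv_into_f inv_into_into subsetD)
  define P where "P = g ` B"
  have fP: "f ` P = B"
    using g by (force simp: P_def)
  have "inj_on f P"
    using g by (auto simp: P_def inj_on_def)
  then have inj: "inj_on f (vs1.span P)"
    using f.inj_on_span_iff_independent_image B(2) fP by blast
  have P_span: "vs1.span P \<subseteq> S"
    using g by (auto simp: P_def intro!: vs1.span_minimal[OF _ S])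
  have "f ` S \<subseteq> f ` vs1.span P"
    using B(3) f.span_image[of P] fP by simp
  then have "S = {k + y |k y. k \<in> K \<and> y \<in> vs1.span P}"
    unfolding K_def by (rule subspace_eq_kernel_part_plus[OF f S P_span])
  moreover have "vs1.subspace K"
    unfolding K_def by (rule vs1.subspace_inter[OF S f.subspace_kernel])
  ultimately have "vs1.dim S + vs1.dim (K \<inter> vs1.span P) = vs1.dim K + vs1.dim (vs1.span P)"
    using vs1.dim_sums_Int[of K "vs1.span P"] by simp
  moreover have "vs1.dim (K \<inter> vs1.span P) = 0"
    using inj_onD[OF inj] vs1.span_zero by (auto simp: K_def)
  moreover have "vs1.dim (vs1.span P) = vs2.dim (f ` S)"
    using dim_image_eq[OF f inj] B(2,4) fP by (simp add: vs2.dim_eq_card_independent)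
  ultimately show ?thesis
    unfolding K_def[symmetric] by linarith
qed

end

text \<open>Expanding every column in a basis \<open>C\<close> of the column space exhibits every row as a
  combination of the \<open>card C\<close> coefficient vectors; no inner product is needed.\<close>

lemma dim_rows_le_dim_columns_gen:
  fixes A :: "'a::field^'n^'m"
  shows "vec.dim (rows A) \<le> vec.dim (columns A)"
proof -
  obtain C where C: "C \<subseteq> vec.span (columns A)" "vec.independent C"
      "vec.span (columns A) \<subseteq> vec.span C" "card C = vec.dim (vec.span (columns A))"
    using vec.basis_exists by blast
  have fin: "finite C"
    using C(2) vec.finiteI_independent by blast
  define \<rho> where "\<rho> c = (\<chi> j. vec.representation C (column j A) c)" for c
  have "column j A \<in> vec.span C" for j
    using C(3) vec.span_base[of "column j A" "columns A"] by (auto simp: columns_def)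
  then have "column j A = (\<Sum>c\<in>C. \<rho> c $ j *s c)" for j
    using vec.sum_representation_eq[OF C(2) _ fin order_refl] by (simp add: \<rho>_def)
  then have "row i A = (\<Sum>c\<in>C. c $ i *s \<rho> c)" for i
    by (auto simp: vec_eq_iff row_def column_def sum_component mult.commute)
  then have "row i A \<in> vec.span (\<rho> ` C)" for i
    by (simp add: vec.span_base vec.span_scale vec.span_sum)
  then have "rows A \<subseteq> vec.span (\<rho> ` C)"
    by (auto simp: rows_def)
  then have "vec.dim (rows A) \<le> card (\<rho> ` C)"
    using fin by (simp add: vec.dim_le_card)
  also have "\<dots> \<le> vec.dim (columns A)"
    using card_image_le[OF fin] C(4) by simp
  finally show ?thesis .
qed

lemma column_rank_def_gen: "rank A = vec.dim (columns (A :: 'a::field^'n^'m))"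
  using dim_rows_le_dim_columns_gen[of A] dim_rows_le_dim_columns_gen[of "transpose A"]
  by (simp add: row_rank_def_gen)

lemma rank_transpose_gen: "rank (transpose A) = rank (A :: 'a::field^'n^'m)"
  by (metis column_rank_def_gen row_rank_def_gen rows_transpose)

lemma range_matrix_vector_mult: "range (\<lambda>x. A *v x) = col_space (A :: 'a::field^'n^'m)"
proof
  show "range (\<lambda>x. A *v x) \<subseteq> col_space A"
    using matrix_vector_mult_in_columnspace_gen by (auto simp: col_space_def)
  have "column j A = A *v axis j 1" for j
    by (simp add: vec_eq_iff column_def matrix_vector_mult_def axis_def if_distrib cong: if_cong)
  then have "columns A \<subseteq> range (\<lambda>x. A *v x)"
    by (auto simp: columns_def)
  then show "col_space A \<subseteq> range (\<lambda>x. A *v x)"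
    unfolding col_space_def by (rule vec.span_minimal) (simp add: vec.subspace_image)
qed

lemma dim_null_space_add_rank: "vec.dim {x. A *v x = 0} + rank (A :: 'a::field^'n^'m) = CARD('n)"
  using vec.dim_eq_dim_kernel_add_dim_image[OF matrix_vector_mul_linear_gen vec.subspace_UNIV, of A]
  by (simp add: range_matrix_vector_mult col_space_def column_rank_def_gen card_cart_basis)

lemma dim_left_null_space_add_rank: "vec.dim {y. y v* A = 0} + rank (A :: 'a::field^'n^'m) = CARD('m)"
  using dim_null_space_add_rank[of "transpose A"] by (simp add: rank_transpose_gen)

lemma dim_common_null_space:
  fixes A :: "'a::field^'n^'k" and C :: "'a^'n^'l"
  shows "vec.dim {x. A *v x = 0 \<and> C *v x = 0} + vec.dim (rows A \<union> rows C) = CARD('n)"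
proof -
  define S :: "'a^'n^('k + 'l)" where "S = (\<chi> k. case k of Inl i \<Rightarrow> A $ i | Inr i \<Rightarrow> C $ i)"
  have "row (Inl i) S = row i A" for i
    by (simp add: S_def row_def)
  moreover have "row (Inr i) S = row i C" for i
    by (simp add: S_def row_def)
  ultimately have "rows S = rows A \<union> rows C"
    unfolding rows_def Setcompr_eq_image by (subst UNIV_sum) (simp add: image_Un image_image)
  moreover have "S *v x = 0 \<longleftrightarrow> A *v x = 0 \<and> C *v x = 0" for x
    by (simp add: vec_eq_iff split_sum_all matrix_vector_mult_def S_def)
  ultimately show ?thesis
    using dim_null_space_add_rank[of S] by (simp add: row_rank_def_gen)
qed

lemma image_null_space_eq_col_space:
  fixes A :: "'a::field^'n^'k" and C :: "'a^'n^'l"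
  assumes "row_space A \<inter> row_space C = {0}"
  shows "(\<lambda>x. A *v x) ` {x. C *v x = 0} = col_space A"
proof -
  define N where "N = {x. C *v x = 0}"
  have N: "vec.subspace N"
    unfolding N_def by (rule vec.subspace_kernel)
  have "vec.dim (rows A \<union> rows C) = vec.dim (vec.span (rows A \<union> rows C))"
    by simp
  also have "\<dots> = vec.dim {a + c |a c. a \<in> row_space A \<and> c \<in> row_space C}"
    by (simp add: vec.span_Un row_space_def)
  also have "\<dots> = rank A + rank C"
    using vec.dim_sums_Int[of "row_space A" "row_space C"] assms
    by (simp add: row_space_def row_rank_def_gen)
  finally have "vec.dim (N \<inter> {x. A *v x = 0}) + rank A + rank C = CARD('n)"
    using dim_common_null_space[of A C] by (simp add: N_def conj_commute Collect_conj_eq Int_commute)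
  moreover have "vec.dim N + rank C = CARD('n)"
    unfolding N_def by (rule dim_null_space_add_rank)
  ultimately have "vec.dim ((\<lambda>x. A *v x) ` N) = vec.dim (col_space A)"
    using vec.dim_eq_dim_kernel_add_dim_image[OF matrix_vector_mul_linear_gen N, of A]
    by (simp add: col_space_def column_rank_def_gen)
  moreover have "(\<lambda>x. A *v x) ` N \<subseteq> col_space A"
    using range_matrix_vector_mult[of A] by blast
  ultimately show ?thesis
    unfolding N_def[symmetric]
    by (intro vec.subspace_dim_equal) (auto simp: col_space_def vec.subspace_image N)
qed

section \<open>Matrices with prescribed column and row spaces\<close>

interpretation mat: vector_space "mscale :: 'a::field \<Rightarrow> 'a^'n^'m \<Rightarrow> 'a^'n^'m"
  by unfold_locales (simp_all add: mscale_def vec_eq_iff algebra_simps)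

interpretation matp: vector_space_prod "mscale :: 'a::field \<Rightarrow> 'a^'n^'m \<Rightarrow> 'a^'n^'m"
   "mscale :: 'a::field \<Rightarrow> 'a^'q^'p \<Rightarrow> 'a^'q^'p" ..

lemma pscale_eq_prod_scale: "pscale = module_prod.scale mscale mscale"
  by (intro ext) (simp add: pscale_def matp.scale_def)

definition outer :: "'a::field^'m \<Rightarrow> 'a^'n \<Rightarrow> 'a^'n^'m" where
  "outer u w = (\<chi> i j. u$i * w$j)"

text \<open>The matrix model of the tensor product \<open>U \<otimes> W\<close>.\<close>

definition tensor_space :: "('a::field^'m) set \<Rightarrow> ('a^'n) set \<Rightarrow> ('a^'n^'m) set" where
  "tensor_space U W = {X. (\<forall>j. column j X \<in> U) \<and> (\<forall>i. row i X \<in> W)}"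

lemma tensor_space_UNIV [simp]: "tensor_space UNIV UNIV = UNIV"
  by (simp add: tensor_space_def)

lemma tensor_space_Int: "tensor_space U UNIV \<inter> tensor_space UNIV W = tensor_space U W"
  by (auto simp: tensor_space_def)

lemma column_outer: "column j (outer u w) = w$j *s u"
  by (simp add: outer_def column_def vec_eq_iff mult.commute)

lemma row_outer: "row i (outer u w) = u$i *s w"
  by (simp add: outer_def row_def vec_eq_iff)

lemma outer_add_right: "outer u (w + w') = outer u w + outer u w'"
  by (simp add: outer_def vec_eq_iff distrib_left)

lemma outer_scale_right: "outer u (c *s w) = mscale c (outer u w)"
  by (simp add: outer_def mscale_def vec_eq_iff mult.left_commute)

lemma outer_in_tensor_space: "u \<in> U \<Longrightarrow> w \<in> W \<Longrightarrow> vec.subspace U \<Longrightarrow> vec.subspace W \<Longrightarrow>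
    outer u w \<in> tensor_space U W"
  by (simp add: tensor_space_def column_outer row_outer vec.subspace_scale)

lemma subspace_tensor_space:
  fixes U :: "('a::field^'m) set" and W :: "('a^'n) set"
  assumes "vec.subspace U" "vec.subspace W"
  shows "mat.subspace (tensor_space U W)"
proof -
  have "column j (X + Y) = column j X + column j Y" "column j (mscale c X) = c *s column j X"
    "row i (X + Y) = row i X + row i Y" "row i (mscale c X) = c *s row i X"
    "column j (0 :: 'a^'n^'m) = 0" "row i (0 :: 'a^'n^'m) = 0" for i j and X Y :: "'a^'n^'m" and c
    by (simp_all add: column_def row_def mscale_def vec_eq_iff)
  with assms show ?thesis
    by (simp add: mat.subspace_def tensor_space_def vec.subspace_0 vec.subspace_add vec.subspace_scale)
qed

context vector_space
begin

lemma inj_on_and_independent_image_of_family: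
  assumes I: "finite I" and coeffs: "\<And>c. (\<Sum>i\<in>I. scale (c i) (v i)) = 0 \<Longrightarrow> \<forall>i\<in>I. c i = 0"
  shows "inj_on v I \<and> independent (v ` I)"
proof
  show inj: "inj_on v I"
  proof (rule inj_onI, rule ccontr)
    fix i j assume ij: "i \<in> I" "j \<in> I" "v i = v j" "i \<noteq> j"
    define c :: "_ \<Rightarrow> 'a" where "c k = (if k = i then 1 else if k = j then -1 else 0)" for k
    have "(\<Sum>k\<in>I. scale (c k) (v k)) = (\<Sum>k\<in>{i, j}. scale (c k) (v k))"
      using ij I by (intro sum.mono_neutral_right) (auto simp: c_def)
    also have "\<dots> = 0"
      using ij by (simp add: c_def scale_minus_left)
    finally have "c i = 0"
      using coeffs ij by auto
    then show False
      by (simp add: c_def)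
  qed
  show "independent (v ` I)"
  proof -
    have "c x = 0" if "(\<Sum>x\<in>v ` I. scale (c x) x) = 0" "x \<in> v ` I" for c x
      using coeffs[of "c \<circ> v"] that by (auto simp: sum.reindex[OF inj])
    then have "\<not> (\<exists>c. (\<exists>x\<in>v ` I. c x \<noteq> 0) \<and> (\<Sum>x\<in>v ` I. scale (c x) x) = 0)"
      by blast
    then show ?thesis
      using dependent_finite[OF finite_imageI[OF I]] by simp
  qed
qed

end

lemma outer_coefficients_eq_0:
  assumes BU: "vec.independent BU" and BW: "vec.independent BW"
    and sum_eq_0: "(\<Sum>p\<in>BU \<times> BW. mscale (c p) ((\<lambda>(u, w). outer u w) p)) = 0"
  shows "\<forall>p\<in>BU \<times> BW. c p = 0"
proof -
  have fin: "finite BU" "finite BW"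
    using BU BW vec.finiteI_independent by auto
  have "(\<Sum>u\<in>BU. (\<Sum>w\<in>BW. c (u, w) * w$j) *s u) $ i
      = (\<Sum>p\<in>BU \<times> BW. mscale (c p) ((\<lambda>(u, w). outer u w) p)) $ i $ j" for i j
    by (simp add: sum.cartesian_product' mscale_def outer_def sum_distrib_left
        sum_distrib_right mult_ac)
  then have outer_sum: "(\<Sum>u\<in>BU. (\<Sum>w\<in>BW. c (u, w) * w$j) *s u) = 0" for j
    using sum_eq_0 by (simp add: vec_eq_iff)
  have "(\<Sum>w\<in>BW. c (u, w) * w$j) = 0" if "u \<in> BU" for u j
    by (rule vec.independentD[OF BU fin(1) order_refl outer_sum that])
  then have inner_sum: "(\<Sum>w\<in>BW. c (u, w) *s w) = 0" if "u \<in> BU" for u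
    using that by (simp add: vec_eq_iff)
  have "c (u, w) = 0" if "u \<in> BU" "w \<in> BW" for u w
    by (rule vec.independentD[OF BW fin(2) order_refl inner_sum[OF that(1)] that(2)])
  then show ?thesis
    by auto
qed

lemma inj_on_independent_outer_products:
  assumes BU: "vec.independent BU" and BW: "vec.independent BW"
  shows "inj_on (\<lambda>(u, w). outer u w) (BU \<times> BW)
    \<and> mat.independent ((\<lambda>(u, w). outer u w) ` (BU \<times> BW))"
proof (rule mat.inj_on_and_independent_image_of_family[OF _ outer_coefficients_eq_0[OF BU BW]])
  show "finite (BU \<times> BW)"
    using vec.finiteI_independent[OF BU] vec.finiteI_independent[OF BW] by simp
qed

lemma outer_in_span_outer_products:
  assumes "u \<in> BU" and "w \<in> vec.span BW"
  shows "outer u w \<in> mat.span ((\<lambda>(u, w). outer u w) ` (BU \<times> BW))"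
  using assms(2)
proof (induction rule: vec.span_induct_alt)
  case base
  then show ?case
    using mat.span_zero by (simp add: outer_def zero_vec_def)
next
  case (step c w w')
  moreover have "outer u w \<in> (\<lambda>(u, w). outer u w) ` (BU \<times> BW)"
    using assms(1) step(1) by (intro image_eqI[of _ _ "(u, w)"]) auto
  ultimately show ?case
    by (simp add: outer_add_right outer_scale_right mat.span_add mat.span_scale mat.span_base)
qed

lemma tensor_space_subset_span_outer:
  assumes BU: "vec.independent BU"
  shows "tensor_space (vec.span BU) (vec.span BW)
    \<subseteq> mat.span ((\<lambda>(u, w). outer u w) ` (BU \<times> BW))"
proof
  fix X assume X: "X \<in> tensor_space (vec.span BU) (vec.span BW)"
  have fin: "finite BU"
    using BU vec.finiteI_independent by blast
  obtain BU' where BU': "BU \<subseteq> BU'" "BU' \<subseteq> UNIV" "vec.independent BU'" "UNIV \<subseteq> vec.span BU'"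
    by (rule vec.maximal_independent_subset_extend[OF subset_UNIV BU])
  have span_BU': "vec.span BU' = UNIV"
    using BU'(4) by blast
  \<comment> \<open>\<open>a u\<close> collects the \<open>u\<close>-coordinates of the columns of \<open>X\<close>; the coordinate map is taken
    w.r.t. the extended basis \<open>BU'\<close> so that it is linear on all vectors and \<open>a u\<close> becomes a
    combination of rows of \<open>X\<close>.\<close>
  define a where "a u = (\<chi> j. vec.representation BU' (column j X) u)" for u
  have "column j X = (\<Sum>u\<in>BU. a u $ j *s u)" for j
  proof -
    have "column j X \<in> vec.span BU"
      using X by (simp add: tensor_space_def)
    then show ?thesis
      using vec.sum_representation_eq[OF BU _ fin order_refl]
        vec.representation_extend[OF BU'(3) _ BU'(1)] by (simp add: a_def)
  qed
  then have X_eq: "X = (\<Sum>u\<in>BU. outer u (a u))"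
    by (simp add: vec_eq_iff column_def outer_def mult.commute)
  have a_span: "a u \<in> vec.span BW" for u
  proof -
    interpret coord: Vector_Spaces.linear "(*s)" "(*)" "\<lambda>v. vec.representation BU' v u"
      by (rule vec.linear_representation[OF BU'(3) span_BU'])
    have "column j X = (\<Sum>i\<in>UNIV. X $ i $ j *s axis i 1)" for j
      by (simp add: vec_eq_iff column_def axis_def if_distrib cong: if_cong)
    then have "vec.representation BU' (column j X) u
        = (\<Sum>i\<in>UNIV. X $ i $ j * vec.representation BU' (axis i 1) u)" for j
      by (simp add: coord.sum coord.scale)
    then have "a u = (\<Sum>i\<in>UNIV. vec.representation BU' (axis i 1) u *s row i X)"
      by (simp add: a_def vec_eq_iff row_def mult.commute)
    also have "\<dots> \<in> vec.span BW"
      using X by (simp add: tensor_space_def vec.span_sum vec.span_scale)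
    finally show ?thesis .
  qed
  show "X \<in> mat.span ((\<lambda>(u, w). outer u w) ` (BU \<times> BW))"
    unfolding X_eq using a_span outer_in_span_outer_products by (intro mat.span_sum) blast
qed

lemma dim_tensor_space:
  assumes U: "vec.subspace U" and W: "vec.subspace W"
  shows "mat.dim (tensor_space U W) = vec.dim U * vec.dim W"
proof -
  obtain BU where BU: "BU \<subseteq> U" "vec.independent BU" "U \<subseteq> vec.span BU" "card BU = vec.dim U"
    using vec.basis_exists by blast
  obtain BW where BW: "BW \<subseteq> W" "vec.independent BW" "W \<subseteq> vec.span BW" "card BW = vec.dim W"
    using vec.basis_exists by blast
  have U_eq: "vec.span BU = U" and W_eq: "vec.span BW = W"
    by (rule vec.span_subspace[OF BU(1,3) U], rule vec.span_subspace[OF BW(1,3) W])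
  note outer_basis = inj_on_independent_outer_products[OF BU(2) BW(2)]
  have "card ((\<lambda>(u, w). outer u w) ` (BU \<times> BW)) = mat.dim (tensor_space U W)"
  proof (rule mat.basis_card_eq_dim)
    show "(\<lambda>(u, w). outer u w) ` (BU \<times> BW) \<subseteq> tensor_space U W"
      using BU(1) BW(1) U W by (auto intro: outer_in_tensor_space)
    show "tensor_space U W \<subseteq> mat.span ((\<lambda>(u, w). outer u w) ` (BU \<times> BW))"
      using tensor_space_subset_span_outer[OF BU(2), of BW] U_eq W_eq by simp
  qed (use outer_basis in blast)
  then show ?thesis
    using outer_basis BU(4) BW(4) by (simp add: card_image card_cartesian_product)
qed

interpretation matf: finite_dimensional_vector_space "mscale :: 'a::field \<Rightarrow> 'a^'n^'m \<Rightarrow> 'a^'n^'m"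
  "(\<lambda>(u, w). outer u w) ` (cart_basis \<times> cart_basis)"
proof
  note outer_basis = inj_on_independent_outer_products[OF independent_cart_basis independent_cart_basis]
  show "finite ((\<lambda>(u, w). outer u w) ` (cart_basis \<times> cart_basis) :: ('a^'n^'m) set)"
    by (simp add: finite_cart_basis)
  show "mat.independent ((\<lambda>(u, w). outer u w) ` (cart_basis \<times> cart_basis) :: ('a^'n^'m) set)"
    using outer_basis by blast
  show "mat.span ((\<lambda>(u, w). outer u w) ` (cart_basis \<times> cart_basis) :: ('a^'n^'m) set) = UNIV"
    using tensor_space_subset_span_outer[OF independent_cart_basis, of cart_basis] by auto
qed

interpretation matfp: finite_dimensional_vector_space_prod
  "mscale :: 'a::field \<Rightarrow> 'a^'n^'m \<Rightarrow> 'a^'n^'m" "mscale :: 'a::field \<Rightarrow> 'a^'q^'p \<Rightarrow> 'a^'q^'p"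
  "(\<lambda>(u, w). outer u w) ` (cart_basis \<times> cart_basis)" "(\<lambda>(u, w). outer u w) ` (cart_basis \<times> cart_basis)" ..

lemma dim_UNIV_matrices: "mat.dim (UNIV :: ('a::field^'n^'m) set) = CARD('m) * CARD('n)"
proof -
  have "mat.dim (tensor_space (UNIV :: ('a^'m) set) (UNIV :: ('a^'n) set))
      = vec.dim (UNIV :: ('a^'m) set) * vec.dim (UNIV :: ('a^'n) set)"
    by (rule dim_tensor_space) simp_all
  then show ?thesis
    by (simp add: card_cart_basis)
qed

lemma dim_UNIV_matrix_pairs:
  "pdim (UNIV :: (('a::field^'n^'m) \<times> ('a^'q^'p)) set) = CARD('m) * CARD('n) + CARD('p) * CARD('q)"
  using matfp.dim_Times[OF mat.subspace_UNIV mat.subspace_UNIV]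
  by (simp only: pscale_eq_prod_scale UNIV_Times_UNIV dim_UNIV_matrices)

lemma dim_sum_tensor_spaces:
  fixes U :: "('a::field^'m) set" and W :: "('a^'n) set"
  assumes U: "vec.subspace U" and W: "vec.subspace W"
  shows "mat.dim {a + b |a b. a \<in> tensor_space U UNIV \<and> b \<in> tensor_space UNIV W} + vec.dim U * vec.dim W
    = vec.dim U * CARD('n) + CARD('m) * vec.dim W"
  using matf.dim_sums_Int[OF subspace_tensor_space[OF U vec.subspace_UNIV]
      subspace_tensor_space[OF vec.subspace_UNIV W]]
  by (simp add: tensor_space_Int dim_tensor_space U W card_cart_basis)

section \<open>Linear matrix equations\<close>

lemma column_zero [simp]: "column j 0 = 0"
  by (simp add: column_def vec_eq_iff)

lemma transpose_zero [simp]: "transpose 0 = 0"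
  by (simp add: transpose_def vec_eq_iff)

lemma column_matrix_matrix_mult: "column j (A ** X) = A *v column j X"
  by (simp add: vec_eq_iff column_def matrix_matrix_mult_def matrix_vector_mult_def)

lemma matrix_eq_iff_columns: "X = Y \<longleftrightarrow> (\<forall>j. column j X = column j Y)"
  by (auto simp: vec_eq_iff column_def)

lemma matrix_add_rdistrib: "(X + Y) ** B = X ** B + Y ** B"
  by (simp add: vec_eq_iff matrix_matrix_mult_def sum.distrib distrib_right)

lemma matrix_mult_mscale_right: "A ** mscale c X = mscale c (A ** X)"
  by (simp add: vec_eq_iff mscale_def matrix_matrix_mult_def sum_distrib_left algebra_simps)

lemma mscale_matrix_mult_left: "mscale c Y ** B = mscale c (Y ** B)"
  by (simp add: vec_eq_iff mscale_def matrix_matrix_mult_def sum_distrib_left algebra_simps)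

lemma matrix_mult_eq_0_iff_transpose:
  fixes Y :: "'a::comm_semiring_1^'n^'m"
  shows "Y ** B = 0 \<longleftrightarrow> transpose B ** transpose Y = 0"
  by (subst transpose_iff[symmetric]) (simp add: matrix_transpose_mul)

lemma image_transpose_eq: "transpose ` S = {Y. transpose Y \<in> S}"
proof -
  have "Y \<in> transpose ` S" if "transpose Y \<in> S" for Y
    using imageI[OF that, of transpose] by simp
  then show ?thesis
    by auto
qed

lemma image_transpose_tensor_space: "transpose ` tensor_space U W = tensor_space W U"
  by (auto simp: image_transpose_eq tensor_space_def)

lemma subspace_left_null_space: "vec.subspace {y. y v* (B :: 'a::field^'n^'m) = 0}"
  using vec.subspace_kernel[of "transpose B"] by simp

lemma null_space_matrix_mult_left: "{X. A ** X = 0} = tensor_space {x. A *v x = 0} UNIV"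
  by (auto simp: tensor_space_def matrix_eq_iff_columns[of "A ** _"] column_matrix_matrix_mult)

lemma null_space_matrix_mult_right_eq_transpose:
  fixes B :: "'a::comm_semiring_1^'k^'n"
  shows "{Y :: 'a^'n^'m. Y ** B = 0} = transpose ` {X. transpose B ** X = 0}"
  unfolding image_transpose_eq by (simp add: matrix_mult_eq_0_iff_transpose[of _ B])

lemma null_space_matrix_mult_right:
  fixes B :: "'a::field^'k^'n"
  shows "{Y :: 'a^'n^'m. Y ** B = 0} = tensor_space UNIV {y. y v* B = 0}"
  by (simp add: null_space_matrix_mult_right_eq_transpose null_space_matrix_mult_left
      image_transpose_tensor_space)

lemma matrix_mult_left_image_null_space:
  fixes A :: "'a::field^'n^'k" and C :: "'a^'n^'l"
  assumes "row_space A \<inter> row_space C = {0}"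
  shows "(\<lambda>X. A ** X) ` {X :: 'a^'p^'n. C ** X = 0} = tensor_space (col_space A) UNIV"
proof (intro equalityI subsetI)
  fix Y assume "Y \<in> (\<lambda>X. A ** X) ` {X :: 'a^'p^'n. C ** X = 0}"
  then obtain X :: "'a^'p^'n" where "Y = A ** X"
    by blast
  then have "column j Y \<in> range (\<lambda>x. A *v x)" for j
    by (simp add: column_matrix_matrix_mult)
  then show "Y \<in> tensor_space (col_space A) UNIV"
    by (simp add: tensor_space_def range_matrix_vector_mult)
next
  fix Y :: "'a^'p^'k" assume "Y \<in> tensor_space (col_space A) UNIV"
  then have Y: "column j Y \<in> (\<lambda>x. A *v x) ` {x. C *v x = 0}" for j
    by (simp add: tensor_space_def image_null_space_eq_col_space[OF assms])
  have "\<forall>j. \<exists>x. C *v x = 0 \<and> A *v x = column j Y"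
  proof
    show "\<exists>x. C *v x = 0 \<and> A *v x = column j Y" for j
      using Y[of j] by auto
  qed
  then obtain x where x: "\<forall>j. C *v x j = 0 \<and> A *v x j = column j Y"
    using choice[of "\<lambda>j x. C *v x = 0 \<and> A *v x = column j Y"] by blast
  define X :: "'a^'p^'n" where "X = (\<chi> i j. x j $ i)"
  have "column j X = x j" for j
    by (simp add: X_def column_def vec_eq_iff)
  then have "C ** X = 0" "A ** X = Y"
    using x by (simp_all add: matrix_eq_iff_columns[of "_ ** X"] column_matrix_matrix_mult)
  then show "Y \<in> (\<lambda>X. A ** X) ` {X. C ** X = 0}"
    by blast
qed

lemma matrix_mult_right_image_null_space:
  fixes B :: "'a::field^'k^'n" and C :: "'a^'l^'n"
  assumes "col_space B \<inter> col_space C = {0}"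
  shows "(\<lambda>Y. Y ** B) ` {Y :: 'a^'n^'p. Y ** C = 0} = tensor_space UNIV (row_space B)"
proof -
  have "row_space (transpose B) \<inter> row_space (transpose C) = {0}"
    using assms by (simp add: row_space_def col_space_def)
  note left = matrix_mult_left_image_null_space[OF this, where 'p='p]
  have "(\<lambda>Y. Y ** B) ` {Y :: 'a^'n^'p. Y ** C = 0}
      = transpose ` (\<lambda>X. transpose B ** X) ` {X. transpose C ** X = 0}"
    by (simp add: null_space_matrix_mult_right_eq_transpose image_image matrix_transpose_mul)
  also have "\<dots> = transpose ` tensor_space (row_space B) UNIV"
    using left by (simp add: col_space_def row_space_def)
  finally show ?thesis
    by (simp add: image_transpose_tensor_space)
qed

lemma linear_mult_left_minus_mult_right:
  fixes C :: "'a::field^'n^'m" and D :: "'a^'p^'q"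
  shows "Vector_Spaces.linear (module_prod.scale mscale mscale) mscale
    (\<lambda>(X :: 'a^'p^'n, Y :: 'a^'q^'m). C ** X - Y ** D)"
  by (auto simp: Vector_Spaces.linear_iff matp.p.vector_space_axioms mat.vector_space_axioms
      matp.scale_def matrix_add_ldistrib matrix_add_rdistrib matrix_mult_mscale_right
      mscale_matrix_mult_left mat.scale_right_diff_distrib)

lemma image_mult_left_minus_mult_right:
  fixes C :: "'a::field^'n1^'n3" and D :: "'a^'n2^'n4" and E :: "'a^'n1^'n4"
  assumes "row_space C \<inter> row_space E = {0}" and "col_space D \<inter> col_space E = {0}"
  shows "(\<lambda>(X, Y). C ** X - Y ** D) ` ({X. E ** X = 0} \<times> {Y. Y ** E = 0})
    = {a + b |a b. a \<in> tensor_space (col_space C) UNIV \<and> b \<in> tensor_space UNIV (row_space D)}"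
proof -
  note left = matrix_mult_left_image_null_space[OF assms(1), where 'p='n2]
  note right = matrix_mult_right_image_null_space[OF assms(2), where 'p='n3]
  have R: "mat.subspace (tensor_space UNIV (row_space D) :: ('a^'n2^'n3) set)"
    by (simp add: subspace_tensor_space row_space_def)
  show ?thesis
  proof (intro equalityI subsetI)
    fix Z assume "Z \<in> (\<lambda>(X, Y). C ** X - Y ** D) ` ({X. E ** X = 0} \<times> {Y. Y ** E = 0})"
    then obtain X Y where XY: "E ** X = 0" "Y ** E = 0" "Z = C ** X + - (Y ** D)"
      by auto
    have "Y ** D \<in> tensor_space UNIV (row_space D)"
      using XY(2) by (auto simp flip: right)
    then have "- (Y ** D) \<in> tensor_space UNIV (row_space D)"
      by (rule mat.subspace_neg[OF R])
    moreover have "C ** X \<in> tensor_space (col_space C) UNIV"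
      using XY(1) by (auto simp flip: left)
    ultimately show "Z \<in> {a + b |a b. a \<in> tensor_space (col_space C) UNIV \<and> b \<in> tensor_space UNIV (row_space D)}"
      using XY(3) by blast
  next
    fix Z assume "Z \<in> {a + b |a b. a \<in> tensor_space (col_space C) UNIV \<and> b \<in> tensor_space UNIV (row_space D)}"
    then obtain a b where ab: "a \<in> tensor_space (col_space C) UNIV" "b \<in> tensor_space UNIV (row_space D)"
        "Z = a + b"
      by blast
    obtain X where X: "E ** X = 0" "a = C ** X"
      using ab(1) by (auto simp flip: left)
    obtain Y where Y: "Y ** E = 0" "- b = Y ** D"
      using mat.subspace_neg[OF R ab(2)] by (auto simp flip: right)
    have "Z = C ** X - Y ** D"
      using ab(3) X(2) minus_equation_iff[THEN iffD1, OF Y(2)] by simp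
    then show "Z \<in> (\<lambda>(X, Y). C ** X - Y ** D) ` ({X. E ** X = 0} \<times> {Y. Y ** E = 0})"
      using X(1) Y(1) by force
  qed
qed

lemma codim_two_sided_null_space:
  fixes T42 :: "'a::field^'n2^'n4" and T31 :: "'a^'n1^'n3"
  shows "int (mdim (UNIV :: ('a^'n3^'n2) set))
      - int (mdim {X23 :: 'a^'n3^'n2. T42 ** X23 = 0 \<and> X23 ** T31 = 0})
    = int CARD('n3) * int (rank T42) + int CARD('n2) * int (rank T31)
      - int (rank T31) * int (rank T42)"
proof -
  have "{X :: 'a^'n3^'n2. T42 ** X = 0 \<and> X ** T31 = 0}
      = tensor_space {x. T42 *v x = 0} {y. y v* T31 = 0}"
    by (simp add: Collect_conj_eq null_space_matrix_mult_left null_space_matrix_mult_right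
        tensor_space_Int)
  then have dim_sol: "mdim {X :: 'a^'n3^'n2. T42 ** X = 0 \<and> X ** T31 = 0}
      = vec.dim {x. T42 *v x = 0} * vec.dim {y. y v* T31 = 0}"
    by (simp add: dim_tensor_space vec.subspace_kernel subspace_left_null_space)
  have n2: "vec.dim {x. T42 *v x = 0} + rank T42 = CARD('n2)"
    by (rule dim_null_space_add_rank)
  have n3: "vec.dim {y. y v* T31 = 0} + rank T31 = CARD('n3)"
    by (rule dim_left_null_space_add_rank)
  show ?thesis
    unfolding dim_UNIV_matrices dim_sol n2[symmetric] n3[symmetric] by (simp add: algebra_simps)
qed

lemma dim_coupled_null_space:
  fixes T31 :: "'a::field^'n1^'n3" and T42 :: "'a^'n2^'n4" and T41 :: "'a^'n1^'n4"
  assumes "row_space T31 \<inter> row_space T41 = {0}" and "col_space T42 \<inter> col_space T41 = {0}"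
  shows "pdim {(X12 :: 'a^'n2^'n1, X34 :: 'a^'n4^'n3).
                 T31 ** X12 = X34 ** T42 \<and> T41 ** X12 = 0 \<and> X34 ** T41 = 0}
      + rank T31 * CARD('n2) + CARD('n3) * rank T42
    = vec.dim {x. T41 *v x = 0} * CARD('n2) + CARD('n3) * vec.dim {y. y v* T41 = 0}
      + rank T31 * rank T42"
proof -
  define V where "V = {X :: 'a^'n2^'n1. T41 ** X = 0} \<times> {Y :: 'a^'n4^'n3. Y ** T41 = 0}"
  define \<phi> :: "('a^'n2^'n1) \<times> ('a^'n4^'n3) \<Rightarrow> 'a^'n2^'n3"
    where "\<phi> = (\<lambda>(X, Y). T31 ** X - Y ** T42)"
  have "matp.p.subspace V"
    unfolding V_def null_space_matrix_mult_left null_space_matrix_mult_right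
    by (intro matp.subspace_Times subspace_tensor_space vec.subspace_kernel vec.subspace_UNIV
        subspace_left_null_space)
  moreover have "finite_dimensional_vector_space_pair_1 (module_prod.scale mscale mscale)
      matfp.Basis_pair (mscale :: 'a \<Rightarrow> 'a^'n2^'n3 \<Rightarrow> _)"
    by (intro finite_dimensional_vector_space_pair_1.intro
        matfp.p.finite_dimensional_vector_space_axioms mat.vector_space_axioms)
  ultimately have rank_nullity: "matp.p.dim V = matp.p.dim (V \<inter> {p. \<phi> p = 0}) + mat.dim (\<phi> ` V)"
    using finite_dimensional_vector_space_pair_1.dim_eq_dim_kernel_add_dim_image
      linear_mult_left_minus_mult_right unfolding \<phi>_def by blast
  have solutions: "V \<inter> {p. \<phi> p = 0}
      = {(X12, X34). T31 ** X12 = X34 ** T42 \<and> T41 ** X12 = 0 \<and> X34 ** T41 = 0}"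
    by (auto simp: V_def \<phi>_def)
  have dim_V: "matp.p.dim V
      = vec.dim {x. T41 *v x = 0} * CARD('n2) + CARD('n3) * vec.dim {y. y v* T41 = 0}"
    unfolding V_def null_space_matrix_mult_left null_space_matrix_mult_right
    by (simp add: matfp.dim_Times subspace_tensor_space dim_tensor_space vec.subspace_kernel
        subspace_left_null_space card_cart_basis)
  have "\<phi> ` V = {a + b |a b. a \<in> tensor_space (col_space T31) UNIV
      \<and> b \<in> tensor_space UNIV (row_space T42)}"
    unfolding V_def \<phi>_def by (rule image_mult_left_minus_mult_right[OF assms])
  moreover have "vec.dim (col_space T31) = rank T31"
    by (simp add: col_space_def column_rank_def_gen)
  moreover have "vec.dim (row_space T42) = rank T42"
    by (simp add: row_space_def row_rank_def_gen)
  ultimately have dim_image: "mat.dim (\<phi> ` V) + rank T31 * rank T42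
      = rank T31 * CARD('n2) + CARD('n3) * rank T42"
    using dim_sum_tensor_spaces[of "col_space T31" "row_space T42"]
    by (simp add: col_space_def row_space_def)
  show ?thesis
    unfolding pscale_eq_prod_scale solutions[symmetric] using rank_nullity dim_V dim_image by linarith
qed

lemma codim_coupled_null_space:
  fixes T31 :: "'a::field^'n1^'n3" and T42 :: "'a^'n2^'n4" and T41 :: "'a^'n1^'n4"
  assumes "row_space T31 \<inter> row_space T41 = {0}" and "col_space T42 \<inter> col_space T41 = {0}"
  shows "int (pdim (UNIV :: (('a^'n2^'n1) \<times> ('a^'n4^'n3)) set))
      - int (pdim {(X12 :: 'a^'n2^'n1, X34 :: 'a^'n4^'n3).
                     T31 ** X12 = X34 ** T42 \<and> T41 ** X12 = 0 \<and> X34 ** T41 = 0})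
    = int (rank T41) * int CARD('n2) + int (rank T41) * int CARD('n3)
      + int (rank T31) * int (rank T42)
      + (int CARD('n2) - int (rank T42)) * int (rank T31)
      + (int CARD('n3) - int (rank T31)) * int (rank T42)"
proof -
  have n1: "vec.dim {x. T41 *v x = 0} + rank T41 = CARD('n1)"
    by (rule dim_null_space_add_rank)
  have n4: "vec.dim {y. y v* T41 = 0} + rank T41 = CARD('n4)"
    by (rule dim_left_null_space_add_rank)
  show ?thesis
    using dim_coupled_null_space[OF assms]
    unfolding dim_UNIV_matrix_pairs n1[symmetric] n4[symmetric]
    by (auto simp: algebra_simps dest: arg_cong[where f = int])
qed

theorem lemma3p3:
  fixes T42 :: "'a::field^'n2^'n4" and T31 :: "'a^'n1^'n3" and T41 :: "'a^'n1^'n4"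
  shows
   "(int (mdim (UNIV :: ('a^'n3^'n2) set))
      - int (mdim {X23 :: 'a^'n3^'n2. T42 ** X23 = 0 \<and> X23 ** T31 = 0})
    = int CARD('n3) * int (rank T42) + int CARD('n2) * int (rank T31)
      - int (rank T31) * int (rank T42))
  \<and>
   (row_space T31 \<inter> row_space T41 = {0} \<longrightarrow> col_space T42 \<inter> col_space T41 = {0} \<longrightarrow>
    int (pdim (UNIV :: (('a^'n2^'n1) \<times> ('a^'n4^'n3)) set))
      - int (pdim {(X12 :: 'a^'n2^'n1, X34 :: 'a^'n4^'n3).
                     T31 ** X12 = X34 ** T42 \<and> T41 ** X12 = 0 \<and> X34 ** T41 = 0})
    = int (rank T41) * int CARD('n2) + int (rank T41) * int CARD('n3)
      + int (rank T31) * int (rank T42)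
      + (int CARD('n2) - int (rank T42)) * int (rank T31)
      + (int CARD('n3) - int (rank T31)) * int (rank T42))"
  using codim_two_sided_null_space[of T42 T31] codim_coupled_null_space[of T31 T41 T42] by blast

end
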